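(* Let $T(x,z,t)=\sum_{n\ge0}\Theta_n(z,t)x^n$, with $\Theta_0=1$. (i) For the weights $a_j=1$ for all $j$, as formal power series in $x,z$, \[ T(x,z,t)=\frac{1-zt}{(1-zt)(1-x)-zx}. \] (ii) For the weights $a_j=1/j$, for complex $z,t$ with $zt\notin\{1,2,3,\dots\}$, as a formal power series in $x$, \[ T(x,z,t)={}_2F_1\big(1,\,1+z(1-t);\,1-zt;\,x\big)=\sum_{n\ge0}\frac{(1+z(1-t))_n}{(1-zt)_n}x^n, \] where $(c)_n=c(c+1)\cdots(c+n-1)$.
   Context: Let $\boldsymbol a=(a_j)_{j\ge1}$ be a sequence of positive reals. For $\vec\ell=(\ell_1,\dots,\ell_k)$ with $n\ge\ell_1\ge\cdots\ge\ell_k\ge1$ let $\sigma(\vec\ell)=|\{1\le j\le k-1:\ell_j=\ell_{j+1}\}|$ and $w(\vec\ell)=\prod_j a_{\ell_j}$. Let $\theta_{n;k}(t)=\sum_{n\ge\ell_1\ge\cdots\ge\ell_k\ge1}w(\vec\ell)t^{\sigma(\vec\ell)}$ ($\theta_{n;0}=1$) and $\Theta_n(z,t)=\sum_{k\ge0}\theta_{n;k}(t)z^k$ (so $\Theta_0=1$). *)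

theory Defs
  imports Complex_Main "HOL-Computational_Algebra.Formal_Power_Series"
begin

definition seqs :: "nat \<Rightarrow> nat \<Rightarrow> nat list set" where
  "seqs n k = {xs. length xs = k \<and> sorted_wrt (\<ge>) xs \<and> set xs \<subseteq> {1..n}}"

definition sigma :: "nat list \<Rightarrow> nat" where
  "sigma xs = card {j. Suc j < length xs \<and> xs ! j = xs ! Suc j}"

definition weight :: "(nat \<Rightarrow> 'a::comm_monoid_mult) \<Rightarrow> nat list \<Rightarrow> 'a" where
  "weight a xs = prod_list (map a xs)"

definition theta :: "(nat \<Rightarrow> 'a::comm_ring_1) \<Rightarrow> nat \<Rightarrow> nat \<Rightarrow> 'a \<Rightarrow> 'a" where
  "theta a n k t = (\<Sum>xs\<in>seqs n k. weight a xs * t ^ sigma xs)"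

definition Theta :: "(nat \<Rightarrow> 'a::comm_ring_1) \<Rightarrow> nat \<Rightarrow> 'a \<Rightarrow> 'a fps" where
  "Theta a n t = Abs_fps (\<lambda>k. theta a n k t)"

text \<open>T(x,z,t) as a formal power series in x whose coefficients are formal power series in z.\<close>
definition Tser :: "(nat \<Rightarrow> 'a::comm_ring_1) \<Rightarrow> 'a \<Rightarrow> 'a fps fps" where
  "Tser a t = Abs_fps (\<lambda>n. Theta a n t)"

end

theory Submission
  imports Defs
begin

text \<open>
  Splitting the sequences with \<open>\<ell>\<^sub>1 \<le> n\<close> according to whether \<open>\<ell>\<^sub>1 = n\<close>, and then whether
  also \<open>\<ell>\<^sub>2 = n\<close>, gives \<open>\<Theta>\<^sub>n (1 - a\<^sub>n t z) = \<Theta>\<^sub>n\<^sub>-\<^sub>1 (1 - a\<^sub>n t z + a\<^sub>n z)\<close>.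
  For \<open>a\<^sub>j = 1\<close> the ratio \<open>\<Theta>\<^sub>n / \<Theta>\<^sub>n\<^sub>-\<^sub>1\<close> is independent of \<open>n\<close>, so \<open>T\<close> is a geometric
  series in \<open>x\<close>; for \<open>a\<^sub>j = 1/j\<close> it is \<open>(n + z(1 - t)) / (n - zt)\<close>, and the product of
  these ratios is the quotient of Pochhammer symbols.
\<close>

lemma sigma_Cons:
  "sigma (x # xs) = (if xs \<noteq> [] \<and> hd xs = x then 1 else 0) + sigma xs"
proof -
  let ?J = "\<lambda>xs. {j. Suc j < length xs \<and> xs ! j = xs ! Suc j}"
  let ?H = "{j::nat. j = 0 \<and> xs \<noteq> [] \<and> hd xs = x}"
  have split: "?J (x # xs) = ?H \<union> Suc ` ?J xs"
  proof (rule set_eqI)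
    fix j show "j \<in> ?J (x # xs) \<longleftrightarrow> j \<in> ?H \<union> Suc ` ?J xs"
      by (cases j) (auto simp: hd_conv_nth)
  qed
  have "card (?J (x # xs)) = card ?H + card (Suc ` ?J xs)"
    unfolding split by (rule card_Un_disjoint) (auto intro: finite_subset [of _ "{..<length xs}"])
  then show ?thesis
    by (simp add: sigma_def card_image)
qed

lemma finite_seqs: "finite (seqs n k)"
proof (rule finite_subset)
  show "seqs n k \<subseteq> {xs. set xs \<subseteq> {1..n} \<and> length xs = k}"
    by (auto simp: seqs_def)
qed (rule finite_lists_length_eq, simp)

lemma seqs_0: "seqs n 0 = {[]}"
  by (auto simp: seqs_def)

lemma seqs_0_Suc: "seqs 0 (Suc k) = {}"
  by (auto simp: seqs_def)

lemma seqs_mono: "seqs m k \<subseteq> seqs (Suc m) k"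
  by (auto simp: seqs_def)

lemma Cons_mem_seqs: "x # xs \<in> seqs n (Suc k) \<longleftrightarrow> x \<in> {1..n} \<and> xs \<in> seqs x k"
  by (auto simp: seqs_def subset_iff)

lemma seqs_Suc_Suc:
  "seqs (Suc m) (Suc k) = seqs m (Suc k) \<union> Cons (Suc m) ` seqs (Suc m) k"
proof (rule set_eqI)
  fix xs
  show "xs \<in> seqs (Suc m) (Suc k) \<longleftrightarrow> xs \<in> seqs m (Suc k) \<union> Cons (Suc m) ` seqs (Suc m) k"
  proof (cases xs)
    case Nil then show ?thesis by (auto simp: seqs_def)
  next
    case (Cons x ys) then show ?thesis by (cases "x = Suc m") (auto simp: Cons_mem_seqs)
  qed
qed

lemma mem_seqs_iff_hd_neq:
  assumes "xs \<in> seqs (Suc m) k"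
  shows "xs \<in> seqs m k \<longleftrightarrow> xs = [] \<or> hd xs \<noteq> Suc m"
proof (cases xs)
  case Nil then show ?thesis using assms by (simp add: seqs_def)
next
  case (Cons x ys) then show ?thesis using assms by (cases k) (auto simp: Cons_mem_seqs seqs_0)
qed

lemma theta_Suc_Suc:
  "theta a (Suc m) (Suc k) t = theta a m (Suc k) t
     + a (Suc m) * (theta a m k t + t * (theta a (Suc m) k t - theta a m k t))"
proof -
  let ?f = "\<lambda>xs. weight a xs * t ^ sigma xs"
  let ?new = "seqs (Suc m) k - seqs m k"
  have "theta a (Suc m) (Suc k) t = theta a m (Suc k) t + sum ?f (Cons (Suc m) ` seqs (Suc m) k)"
    unfolding theta_def seqs_Suc_Suc
    by (rule sum.union_disjoint) (auto simp: finite_seqs Cons_mem_seqs)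
  also have "sum ?f (Cons (Suc m) ` seqs (Suc m) k) = sum (?f \<circ> Cons (Suc m)) (seqs (Suc m) k)"
    by (rule sum.reindex) simp
  also have "sum (?f \<circ> Cons (Suc m)) (seqs (Suc m) k)
      = sum (?f \<circ> Cons (Suc m)) (seqs m k) + sum (?f \<circ> Cons (Suc m)) ?new"
    using sum.subset_diff [OF seqs_mono finite_seqs, of "?f \<circ> Cons (Suc m)" m k]
    by (simp add: add.commute)
  also have "sum (?f \<circ> Cons (Suc m)) (seqs m k) = a (Suc m) * theta a m k t"
    unfolding theta_def sum_distrib_left
  proof (rule sum.cong [OF refl])
    fix ys assume ys: "ys \<in> seqs m k"
    then have "ys = [] \<or> hd ys \<noteq> Suc m"
      using mem_seqs_iff_hd_neq [OF subsetD [OF seqs_mono ys]] by simp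
    then show "(?f \<circ> Cons (Suc m)) ys = a (Suc m) * ?f ys"
      by (auto simp: sigma_Cons weight_def)
  qed
  also have "sum (?f \<circ> Cons (Suc m)) ?new = a (Suc m) * t * sum ?f ?new"
    unfolding sum_distrib_left
  proof (rule sum.cong [OF refl])
    fix ys assume "ys \<in> ?new"
    then have "ys \<noteq> [] \<and> hd ys = Suc m"
      using mem_seqs_iff_hd_neq [of ys m k] by simp
    then show "(?f \<circ> Cons (Suc m)) ys = a (Suc m) * t * ?f ys"
      by (simp add: sigma_Cons weight_def)
  qed
  also have "sum ?f ?new = theta a (Suc m) k t - theta a m k t"
    unfolding theta_def using sum.subset_diff [OF seqs_mono finite_seqs, of ?f m k]
    by (simp add: algebra_simps)
  finally show ?thesis
    by (simp add: algebra_simps)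
qed

lemma theta_0: "theta a n 0 t = 1"
  by (simp add: theta_def seqs_0 weight_def sigma_def)

lemma theta_0_Suc: "theta a 0 (Suc k) t = 0"
  by (simp add: theta_def seqs_0_Suc)

lemma Theta_0: "Theta a 0 t = 1"
proof (rule fps_ext)
  fix n show "fps_nth (Theta a 0 t) n = fps_nth 1 n"
    by (cases n) (simp_all add: Theta_def theta_0 theta_0_Suc)
qed

lemma Theta_Suc_mult:
  "Theta a (Suc m) t * (1 - fps_const (a (Suc m) * t) * fps_X)
     = Theta a m t * (1 - fps_const (a (Suc m) * t) * fps_X + fps_const (a (Suc m)) * fps_X)"
proof (rule fps_ext)
  fix n
  show "fps_nth (Theta a (Suc m) t * (1 - fps_const (a (Suc m) * t) * fps_X)) n
      = fps_nth (Theta a m t * (1 - fps_const (a (Suc m) * t) * fps_X + fps_const (a (Suc m)) * fps_X)) n"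
    by (cases n) (simp_all add: Theta_def theta_Suc_Suc theta_0 algebra_simps)
qed

lemma Abs_fps_mult_linear_eq_const:
  fixes f :: "nat \<Rightarrow> 'a::comm_ring_1"
  assumes "f 0 = 1" and "\<And>m. f (Suc m) * d = f m * c"
  shows "Abs_fps f * (fps_const d - fps_X * fps_const c) = fps_const d"
proof (rule fps_ext)
  fix n
  show "fps_nth (Abs_fps f * (fps_const d - fps_X * fps_const c)) n = fps_nth (fps_const d) n"
  proof (cases n)
    case (Suc m)
    then show ?thesis using assms(2)[of m] by (simp add: algebra_simps)
  qed (simp add: assms(1))
qed

lemma Theta_harmonic_Suc:
  fixes t :: "'a::field_char_0"
  shows "Theta (\<lambda>j. 1 / of_nat j) (Suc m) t * (1 - fps_const t * fps_X + of_nat m)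
     = Theta (\<lambda>j. 1 / of_nat j) m t * (1 + fps_const (1 - t) * fps_X + of_nat m)"
proof -
  let ?a = "\<lambda>j. 1 / of_nat j :: 'a"
  let ?c = "fps_const (of_nat (Suc m)) :: 'a fps"
  have c: "?c = 1 + of_nat m"
    by (simp add: fps_of_nat [symmetric] fps_const_add [symmetric])
  have denom: "?c * (1 - fps_const (?a (Suc m) * t) * fps_X) = 1 - fps_const t * fps_X + of_nat m"
  proof -
    have "?c * fps_const (?a (Suc m) * t) = fps_const t"
      unfolding fps_const_mult by (simp del: of_nat_Suc)
    then have "?c * (1 - fps_const (?a (Suc m) * t) * fps_X) = ?c - fps_const t * fps_X"
      by (simp only: right_diff_distrib mult_1_right mult.assoc [symmetric])
    then show ?thesis
      unfolding c by (simp add: algebra_simps)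
  qed
  have numer: "?c * (1 - fps_const (?a (Suc m) * t) * fps_X + fps_const (?a (Suc m)) * fps_X)
      = 1 + fps_const (1 - t) * fps_X + of_nat m"
  proof -
    have "?c * fps_const (?a (Suc m)) = 1"
      unfolding fps_const_mult by (simp del: of_nat_Suc)
    then have "?c * (fps_const (?a (Suc m)) * fps_X) = fps_X"
      by (metis mult.assoc mult_1)
    with denom show ?thesis
      by (simp add: algebra_simps flip: fps_const_sub)
  qed
  have "Theta ?a (Suc m) t * (1 - fps_const t * fps_X + of_nat m)
      = ?c * (Theta ?a (Suc m) t * (1 - fps_const (?a (Suc m) * t) * fps_X))"
    unfolding denom [symmetric] by (rule mult.left_commute)
  also have "\<dots> = Theta ?a m t * (1 + fps_const (1 - t) * fps_X + of_nat m)"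
    unfolding Theta_Suc_mult [of ?a] numer [symmetric] by (rule mult.left_commute)
  finally show ?thesis .
qed

lemma Theta_harmonic_mult_pochhammer:
  fixes t :: "'a::field_char_0"
  shows "Theta (\<lambda>j. 1 / of_nat j) n t * pochhammer (1 - fps_const t * fps_X) n
     = pochhammer (1 + fps_const (1 - t) * fps_X) n"
proof (induction n)
  case 0
  show ?case by (simp add: Theta_0)
next
  case (Suc n)
  let ?\<Theta> = "\<lambda>n. Theta (\<lambda>j. 1 / of_nat j) n t"
  let ?D = "1 - fps_const t * fps_X" and ?N = "1 + fps_const (1 - t) * fps_X"
  have "?\<Theta> (Suc n) * pochhammer ?D (Suc n) = ?\<Theta> (Suc n) * (?D + of_nat n) * pochhammer ?D n"
    by (simp add: pochhammer_Suc ac_simps)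
  also have "\<dots> = ?\<Theta> n * (?N + of_nat n) * pochhammer ?D n"
    by (simp only: Theta_harmonic_Suc)
  also have "\<dots> = (?\<Theta> n * pochhammer ?D n) * (?N + of_nat n)"
    by (simp only: ac_simps)
  also have "\<dots> = pochhammer ?N (Suc n)"
    by (simp add: Suc.IH pochhammer_Suc)
  finally show ?case .
qed

lemma pochhammer_fps_neq_0:
  fixes f :: "'a::{comm_ring_1,semiring_char_0} fps"
  assumes "fps_nth f 0 = 1"
  shows "pochhammer f n \<noteq> 0"
proof -
  have "fps_nth (pochhammer f n) 0 = of_nat (fact n)"
    by (induction n) (simp_all add: pochhammer_Suc assms algebra_simps)
  moreover have "(of_nat (fact n) :: 'a) \<noteq> 0"
    unfolding of_nat_eq_0_iff by (rule fact_nonzero)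
  ultimately show ?thesis
    by (metis fps_zero_nth)
qed

lemma Tser_harmonic_weights:
  fixes t :: "'a::field_char_0"
  shows "Tser (\<lambda>j. 1 / of_nat j) t =
           Abs_fps (\<lambda>n. pochhammer (1 + fps_const (1 - t) * fps_X) n
                         / pochhammer (1 - fps_const t * fps_X) n)"
proof -
  have "Theta (\<lambda>j. 1 / of_nat j) n t
      = pochhammer (1 + fps_const (1 - t) * fps_X) n / pochhammer (1 - fps_const t * fps_X) n" for n
  proof -
    have "pochhammer (1 - fps_const t * fps_X) n \<noteq> 0"
      by (rule pochhammer_fps_neq_0) simp
    then show ?thesis
      by (simp flip: Theta_harmonic_mult_pochhammer)
  qed
  then show ?thesis
    by (simp add: Tser_def)
qed

lemma Tser_one_weights:
  fixes t :: "'a::comm_ring_1"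
  shows "Tser (\<lambda>j. 1) t * ((1 - fps_const (fps_const t * fps_X)) * (1 - fps_X) - fps_const fps_X * fps_X)
     = fps_const (1 - fps_const t * fps_X)"
proof -
  let ?D = "1 - fps_const t * fps_X"
  have "(1 - fps_const (fps_const t * fps_X)) * (1 - fps_X) - fps_const fps_X * fps_X
      = fps_const ?D - fps_X * fps_const (?D + fps_X)"
    by (simp add: algebra_simps flip: fps_const_add fps_const_mult fps_const_neg fps_const_sub)
  moreover have "Tser (\<lambda>j. 1) t * (fps_const ?D - fps_X * fps_const (?D + fps_X)) = fps_const ?D"
    unfolding Tser_def
    by (rule Abs_fps_mult_linear_eq_const) (use Theta_Suc_mult [of "\<lambda>j. 1"] in \<open>simp_all add: Theta_0\<close>)
  ultimately show ?thesis
    by simp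
qed

theorem mainTheorem8:
  fixes t :: complex
  shows "(Tser (\<lambda>j. 1) t *
           ((1 - fps_const (fps_const t * fps_X)) * (1 - fps_X) - fps_const fps_X * fps_X)
         = fps_const (1 - fps_const t * fps_X)) \<and>
         Tser (\<lambda>j. 1 / of_nat j) t =
           Abs_fps (\<lambda>n. pochhammer (1 + fps_const (1 - t) * fps_X) n
                         / pochhammer (1 - fps_const t * fps_X) n)"
  using Tser_one_weights Tser_harmonic_weights by blast

end
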